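(* Let $\eta$ and $\hat\eta$ be probability measures on $\mathbb{R}^d$ with positive, continuously differentiable Lebesgue densities (also denoted $\eta,\hat\eta$). Suppose $\hat\eta$ satisfies a Poincaré inequality with constant $C^{-1}$, $C>0$: for every (sufficiently regular) $\phi:\mathbb{R}^d\to\mathbb{R}$ with $\int\phi\,d\hat\eta=0$, $$\int\phi(\theta)^2\,\hat\eta(d\theta)\le C^{-1}\int\|\nabla\phi(\theta)\|_2^2\,\hat\eta(d\theta).$$ Then $$d_H(\eta,\hat\eta)\le(2C)^{-1/2}F_{2,\eta}(\eta,\hat\eta).$$
   Context: $d_H(\eta,\hat\eta)=\{\int|\eta(\theta)^{1/2}-\hat\eta(\theta)^{1/2}|^2\,d\theta\}^{1/2}$ is the Hellinger distance. $F_{2,\eta}(\eta,\hat\eta)=\left\{\int\|\nabla\log\eta(\theta)-\nabla\log\hat\eta(\theta)\|_2^2\,\eta(d\theta)\right\}^{1/2}$. *)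

theory Defs
  imports "HOL-Analysis.Analysis"
begin

definition grad :: "('a::euclidean_space \<Rightarrow> real) \<Rightarrow> 'a \<Rightarrow> 'a" where
  "grad f x = (\<Sum>b\<in>Basis. frechet_derivative f (at x) b *\<^sub>R b)"

definition C1_fun :: "('a::euclidean_space \<Rightarrow> real) \<Rightarrow> bool" where
  "C1_fun f \<longleftrightarrow> (\<forall>x. f differentiable (at x)) \<and> continuous_on UNIV (grad f)"

definition pos_C1_density :: "('a::euclidean_space \<Rightarrow> real) \<Rightarrow> bool" where
  "pos_C1_density p \<longleftrightarrow> (\<forall>x. p x > 0) \<and> C1_fun p \<and>
     integrable lborel p \<and> (\<integral>x. p x \<partial>lborel) = 1"

definition hellinger :: "('a::euclidean_space \<Rightarrow> real) \<Rightarrow> ('a \<Rightarrow> real) \<Rightarrow> real" where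
  "hellinger p q = sqrt (\<integral>x. (sqrt (p x) - sqrt (q x))\<^sup>2 \<partial>lborel)"

definition ennsqrt :: "ennreal \<Rightarrow> ennreal" where
  "ennsqrt t = (if t = \<infinity> then \<infinity> else ennreal (sqrt (enn2real t)))"

definition fisher2 :: "('a::euclidean_space \<Rightarrow> real) \<Rightarrow> ('a \<Rightarrow> real) \<Rightarrow> ennreal" where
  "fisher2 p q = ennsqrt (\<integral>\<^sup>+x. ennreal ((norm (grad (\<lambda>y. ln (p y)) x - grad (\<lambda>y. ln (q y)) x))\<^sup>2 * p x) \<partial>lborel)"

definition poincare :: "('a::euclidean_space \<Rightarrow> real) \<Rightarrow> real \<Rightarrow> bool" where
  "poincare q C \<longleftrightarrow> (\<forall>\<phi>. C1_fun \<phi> \<and>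
      integrable lborel (\<lambda>x. \<phi> x * q x) \<and>
      integrable lborel (\<lambda>x. (\<phi> x)\<^sup>2 * q x) \<and>
      integrable lborel (\<lambda>x. (norm (grad \<phi> x))\<^sup>2 * q x) \<and>
      (\<integral>x. \<phi> x * q x \<partial>lborel) = 0 \<longrightarrow>
      (\<integral>x. (\<phi> x)\<^sup>2 * q x \<partial>lborel) \<le> inverse C * (\<integral>x. (norm (grad \<phi> x))\<^sup>2 * q x \<partial>lborel))"

end

theory Submission
  imports Defs
begin

text \<open>With the Bhattacharyya coefficient \<open>B = \<integral> sqrt (\<eta> \<eta>h)\<close> one has \<open>d_H\<^sup>2 = 2 - 2B\<close>.
  Apply the Poincare inequality for \<open>\<eta>h\<close> to the centred test function \<open>\<psi> = sqrt (\<eta> / \<eta>h) - B\<close>: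
  its variance is \<open>\<integral> \<psi>\<^sup>2 \<eta>h = 1 - B\<^sup>2\<close>, and since \<open>\<nabla> sqrt (\<eta> / \<eta>h) = sqrt (\<eta> / \<eta>h) (\<nabla> log \<eta> - \<nabla> log \<eta>h) / 2\<close>,
  its Dirichlet energy is \<open>\<integral> \<parallel>\<nabla>\<psi>\<parallel>\<^sup>2 \<eta>h = F\<^sub>2\<^sup>2 / 4\<close>. Hence \<open>1 - B\<^sup>2 \<le> F\<^sub>2\<^sup>2 / (4C)\<close>, and
  \<open>2 (1 - B) \<le> 2 (1 - B\<^sup>2)\<close> because \<open>0 \<le> B \<le> 1\<close>.\<close>

lemma grad_eqI:
  fixes f :: "'a::euclidean_space \<Rightarrow> real"
  assumes "(f has_derivative (\<lambda>h. v \<bullet> h)) (at x)"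
  shows "grad f x = v"
proof -
  have "frechet_derivative f (at x) = (\<lambda>h. v \<bullet> h)"
    using frechet_derivative_at[OF assms] by simp
  then show ?thesis unfolding grad_def by (simp add: euclidean_representation)
qed

lemma has_derivative_grad:
  fixes f :: "'a::euclidean_space \<Rightarrow> real"
  assumes "f differentiable (at x)"
  shows "(f has_derivative (\<lambda>h. grad f x \<bullet> h)) (at x)"
proof -
  define D where "D = frechet_derivative f (at x)"
  have D: "(f has_derivative D) (at x)"
    using assms frechet_derivative_works D_def by blast
  have "D h = grad f x \<bullet> h" for h
  proof -
    have "D h = D (\<Sum>b\<in>Basis. (h \<bullet> b) *\<^sub>R b)" by (simp add: euclidean_representation)
    also have "\<dots> = (\<Sum>b\<in>Basis. (h \<bullet> b) * D b)"
      using has_derivative_linear[OF D] by (simp add: linear_sum linear_scale)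
    also have "\<dots> = grad f x \<bullet> h"
      unfolding grad_def D_def[symmetric] by (simp add: inner_sum_right inner_commute mult.commute)
    finally show ?thesis .
  qed
  then have "D = (\<lambda>h. grad f x \<bullet> h)" by auto
  with D show ?thesis by simp
qed

lemma C1_fun_continuous_on:
  fixes f :: "'a::euclidean_space \<Rightarrow> real"
  shows "C1_fun f \<Longrightarrow> continuous_on UNIV f"
  unfolding C1_fun_def
  by (meson continuous_at_imp_continuous_on differentiable_imp_continuous_within)

lemma has_derivative_ln_grad:
  fixes p :: "'a::euclidean_space \<Rightarrow> real"
  assumes "p differentiable (at x)" and "p x > 0"
  shows "((\<lambda>y. ln (p y)) has_derivative (\<lambda>h. (grad p x /\<^sub>R p x) \<bullet> h)) (at x)"
proof -
  have "((\<lambda>y. ln (p y)) has_derivative (\<lambda>h. (grad p x \<bullet> h) * inverse (p x))) (at x)"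
    using has_derivative_ln[OF _ has_derivative_grad[OF assms(1)]] assms(2) by simp
  then show ?thesis by (simp add: field_simps)
qed

lemma grad_ln:
  fixes p :: "'a::euclidean_space \<Rightarrow> real"
  assumes "p differentiable (at x)" and "p x > 0"
  shows "grad (\<lambda>y. ln (p y)) x = grad p x /\<^sub>R p x"
  using grad_eqI[OF has_derivative_ln_grad[OF assms]] .

lemma continuous_on_grad_ln:
  fixes p :: "'a::euclidean_space \<Rightarrow> real"
  assumes "C1_fun p" and "\<And>x. p x > 0"
  shows "continuous_on UNIV (grad (\<lambda>y. ln (p y)))"
proof -
  have "grad (\<lambda>y. ln (p y)) = (\<lambda>x. grad p x /\<^sub>R p x)"
    using assms grad_ln unfolding C1_fun_def by blast
  then show ?thesis
    using assms C1_fun_continuous_on[OF assms(1)] unfolding C1_fun_def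
    by (auto intro!: continuous_intros simp: less_imp_neq[symmetric])
qed

lemma has_derivative_sqrt_ratio:
  fixes p q :: "'a::euclidean_space \<Rightarrow> real"
  assumes "\<And>y. p y > 0" and "\<And>y. q y > 0"
    and "p differentiable (at x)" and "q differentiable (at x)"
  shows "((\<lambda>y. sqrt (p y / q y)) has_derivative
     (\<lambda>h. ((sqrt (p x / q x) / 2) *\<^sub>R (grad (\<lambda>y. ln (p y)) x - grad (\<lambda>y. ln (q y)) x)) \<bullet> h)) (at x)"
proof -
  have exp_form: "sqrt (p y / q y) = exp ((ln (p y) - ln (q y)) / 2)" for y
    using assms(1,2)[of y]
    by (simp add: powr_half_sqrt[symmetric] powr_def ln_div)
  have "((\<lambda>y. ln (p y) - ln (q y)) has_derivative
      (\<lambda>h. grad (\<lambda>y. ln (p y)) x \<bullet> h - grad (\<lambda>y. ln (q y)) x \<bullet> h)) (at x)"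
    using has_derivative_ln_grad[OF assms(3,1)] has_derivative_ln_grad[OF assms(4,2)]
    unfolding grad_ln[OF assms(3,1), symmetric] grad_ln[OF assms(4,2), symmetric]
    by (rule has_derivative_diff)
  from has_derivative_mult_right[OF this, of "1/2"]
  have "((\<lambda>y. (ln (p y) - ln (q y)) / 2) has_derivative
      (\<lambda>h. (grad (\<lambda>y. ln (p y)) x \<bullet> h - grad (\<lambda>y. ln (q y)) x \<bullet> h) / 2)) (at x)"
    by simp
  from has_derivative_exp[OF this] show ?thesis
    unfolding exp_form[symmetric]
    by (rule has_derivative_eq_rhs) (auto simp: inner_diff_left field_simps)
qed

lemma C1_fun_sqrt_ratio_diff:
  fixes p q :: "'a::euclidean_space \<Rightarrow> real" and c :: real
  assumes "C1_fun p" "C1_fun q" "\<And>y. p y > 0" "\<And>y. q y > 0"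
  defines "\<psi> \<equiv> \<lambda>y. sqrt (p y / q y) - c"
  shows "C1_fun \<psi>"
    and "grad \<psi> x = (sqrt (p x / q x) / 2) *\<^sub>R (grad (\<lambda>y. ln (p y)) x - grad (\<lambda>y. ln (q y)) x)"
proof -
  have D: "(\<psi> has_derivative
      (\<lambda>h. ((sqrt (p x / q x) / 2) *\<^sub>R (grad (\<lambda>y. ln (p y)) x - grad (\<lambda>y. ln (q y)) x)) \<bullet> h)) (at x)"
    for x
  proof -
    have "p differentiable (at x)" "q differentiable (at x)"
      using assms(1,2) by (auto simp: C1_fun_def)
    from has_derivative_sqrt_ratio[OF assms(3,4) this]
    show ?thesis unfolding \<psi>_def by (auto intro: derivative_eq_intros)
  qed
  then show grad_\<psi>: "grad \<psi> x = (sqrt (p x / q x) / 2) *\<^sub>R (grad (\<lambda>y. ln (p y)) x - grad (\<lambda>y. ln (q y)) x)"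
    for x
    by (rule grad_eqI)
  have "continuous_on UNIV (\<lambda>x. sqrt (p x / q x))"
    using C1_fun_continuous_on[OF assms(1)] C1_fun_continuous_on[OF assms(2)] assms(4)
    by (auto intro!: continuous_intros simp: less_imp_neq[symmetric])
  then have "continuous_on UNIV (grad \<psi>)"
    unfolding grad_\<psi> using continuous_on_grad_ln assms(1-4)
    by (auto intro!: continuous_intros)
  with D show "C1_fun \<psi>" unfolding C1_fun_def by (auto simp: differentiable_def)
qed

definition bhattacharyya :: "('a::euclidean_space \<Rightarrow> real) \<Rightarrow> ('a \<Rightarrow> real) \<Rightarrow> real" where
  "bhattacharyya p q = (\<integral>x. sqrt (p x * q x) \<partial>lborel)"

lemma integrable_sqrt_mult:
  fixes p q :: "'a::euclidean_space \<Rightarrow> real"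
  assumes "integrable lborel p" "integrable lborel q" "\<And>x. p x \<ge> 0" "\<And>x. q x \<ge> 0"
  shows "integrable lborel (\<lambda>x. sqrt (p x * q x))"
proof (rule Bochner_Integration.integrable_bound[OF Bochner_Integration.integrable_add[OF assms(1,2)]])
  show "(\<lambda>x. sqrt (p x * q x)) \<in> borel_measurable lborel"
    using assms(1,2) by measurable
  have "norm (sqrt (p x * q x)) \<le> norm (p x + q x)" for x
  proof -
    have "sqrt (p x * q x) \<le> (p x + q x) / 2"
      using assms(3,4) by (intro arith_geo_mean_sqrt) auto
    then show ?thesis using assms(3,4)[of x] by simp
  qed
  then show "AE x in lborel. norm (sqrt (p x * q x)) \<le> norm (p x + q x)" by simp
qed

lemma bhattacharyya_nonneg:
  "(\<And>x. p x \<ge> 0) \<Longrightarrow> (\<And>x. q x \<ge> 0) \<Longrightarrow> bhattacharyya p q \<ge> 0"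
  unfolding bhattacharyya_def by (intro integral_nonneg_AE AE_I2) simp

lemma integral_sqrt_diff_sq:
  fixes p q :: "'a::euclidean_space \<Rightarrow> real"
  assumes "integrable lborel p" "integrable lborel q" "\<And>x. p x \<ge> 0" "\<And>x. q x \<ge> 0"
    and "(\<integral>x. p x \<partial>lborel) = 1" "(\<integral>x. q x \<partial>lborel) = 1"
  shows "(\<integral>x. (sqrt (p x) - sqrt (q x))\<^sup>2 \<partial>lborel) = 2 - 2 * bhattacharyya p q"
proof -
  have "(sqrt (p x) - sqrt (q x))\<^sup>2 = p x + q x - 2 * sqrt (p x * q x)" for x
    using assms(3,4)[of x] by (simp add: power2_diff real_sqrt_mult)
  then show ?thesis
    using assms integrable_sqrt_mult[OF assms(1-4)] by (simp add: bhattacharyya_def)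
qed

lemma bhattacharyya_le_1:
  fixes p q :: "'a::euclidean_space \<Rightarrow> real"
  assumes "integrable lborel p" "integrable lborel q" "\<And>x. p x \<ge> 0" "\<And>x. q x \<ge> 0"
    and "(\<integral>x. p x \<partial>lborel) = 1" "(\<integral>x. q x \<partial>lborel) = 1"
  shows "bhattacharyya p q \<le> 1"
proof -
  have "0 \<le> (\<integral>x. (sqrt (p x) - sqrt (q x))\<^sup>2 \<partial>lborel)" by (intro integral_nonneg_AE) auto
  then show ?thesis using integral_sqrt_diff_sq[OF assms] by simp
qed

definition fisher_density :: "('a::euclidean_space \<Rightarrow> real) \<Rightarrow> ('a \<Rightarrow> real) \<Rightarrow> 'a \<Rightarrow> real" where
  "fisher_density p q x = (norm (grad (\<lambda>y. ln (p y)) x - grad (\<lambda>y. ln (q y)) x))\<^sup>2 * p x"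

lemma fisher2_cases:
  fixes p q :: "'a::euclidean_space \<Rightarrow> real"
  assumes "pos_C1_density p" "pos_C1_density q"
  obtains "fisher2 p q = \<infinity>"
  | "integrable lborel (fisher_density p q)"
    "fisher2 p q = ennreal (sqrt (\<integral>x. fisher_density p q x \<partial>lborel))"
proof -
  have pos: "\<And>x. p x > 0" and C1: "C1_fun p" "C1_fun q" and "\<And>x. q x > 0"
    using assms unfolding pos_C1_density_def by auto
  then have "continuous_on UNIV (fisher_density p q)"
    unfolding fisher_density_def[abs_def]
    using continuous_on_grad_ln C1_fun_continuous_on[OF C1(1)]
    by (auto intro!: continuous_intros)
  then have meas: "fisher_density p q \<in> borel_measurable lborel"
    by (simp add: borel_measurable_continuous_onI)
  have nonneg: "fisher_density p q x \<ge> 0" for x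
    unfolding fisher_density_def using pos[of x] by simp
  have fisher2_eq: "fisher2 p q = ennsqrt (\<integral>\<^sup>+x. ennreal (fisher_density p q x) \<partial>lborel)"
    unfolding fisher2_def fisher_density_def ..
  show ?thesis
  proof (cases "(\<integral>\<^sup>+x. ennreal (fisher_density p q x) \<partial>lborel)" rule: ennreal_cases)
    case top
    then show ?thesis using that(1) unfolding fisher2_eq ennsqrt_def by simp
  next
    case (real r)
    then have int: "integrable lborel (fisher_density p q)"
      using nonneg by (intro integrableI_nn_integral_finite[OF meas]) auto
    have "(\<integral>\<^sup>+x. ennreal (fisher_density p q x) \<partial>lborel) = ennreal (\<integral>x. fisher_density p q x \<partial>lborel)"
      using nonneg by (intro nn_integral_eq_integral[OF int]) auto
    with real have "r = (\<integral>x. fisher_density p q x \<partial>lborel)"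
      using nonneg by (metis ennreal_inj integral_nonneg_AE AE_I2)
    with real show ?thesis
      using that(2)[OF int] unfolding fisher2_eq ennsqrt_def by simp
  qed
qed

lemma sqrt_divide_mult_self:
  fixes a b :: real
  assumes "b \<ge> 0"
  shows "sqrt (a / b) * b = sqrt (a * b)"
proof -
  have "sqrt (a / b) * b = sqrt a * (b / sqrt b)"
    by (simp add: real_sqrt_divide)
  also have "b / sqrt b = sqrt b"
    using assms by (rule real_div_sqrt)
  finally show ?thesis by (simp add: real_sqrt_mult)
qed

lemma poincare_bhattacharyya:
  fixes p q :: "'a::euclidean_space \<Rightarrow> real"
  assumes "pos_C1_density p" "pos_C1_density q" "poincare q C"
    and "integrable lborel (fisher_density p q)"
  shows "1 - (bhattacharyya p q)\<^sup>2 \<le> inverse C * ((\<integral>x. fisher_density p q x \<partial>lborel) / 4)"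
proof -
  have pos: "\<And>x. p x > 0" "\<And>x. q x > 0" and C1: "C1_fun p" "C1_fun q"
    and int: "integrable lborel p" "integrable lborel q"
    and one: "(\<integral>x. p x \<partial>lborel) = 1" "(\<integral>x. q x \<partial>lborel) = 1"
    using assms(1,2) unfolding pos_C1_density_def by auto
  define B where "B = bhattacharyya p q"
  define \<psi> where "\<psi> = (\<lambda>y. sqrt (p y / q y) - B)"
  have int_sqrt: "integrable lborel (\<lambda>x. sqrt (p x * q x))"
    using integrable_sqrt_mult[OF int] pos by (simp add: less_imp_le)
  have ratio_q: "sqrt (p y / q y) * q y = sqrt (p y * q y)" for y
    using pos[of y] by (simp add: sqrt_divide_mult_self)
  have ratio_sq: "(sqrt (p y / q y))\<^sup>2 * q y = p y" for y
    using pos[of y] by (simp add: less_imp_le)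
  have \<psi>_mult: "\<psi> y * q y = sqrt (p y * q y) - B * q y" for y
    unfolding \<psi>_def by (simp add: algebra_simps flip: ratio_q)
  have \<psi>_sq: "(\<psi> y)\<^sup>2 * q y = p y - 2 * B * sqrt (p y * q y) + B\<^sup>2 * q y" for y
  proof -
    have "(\<psi> y)\<^sup>2 * q y = (sqrt (p y / q y))\<^sup>2 * q y - 2 * B * (sqrt (p y / q y) * q y) + B\<^sup>2 * q y"
      unfolding \<psi>_def by (simp add: power2_diff algebra_simps)
    then show ?thesis unfolding ratio_sq ratio_q .
  qed
  have grad_\<psi>_sq: "(norm (grad \<psi> x))\<^sup>2 * q x = fisher_density p q x / 4" for x
  proof -
    have "(norm (grad \<psi> x))\<^sup>2 * q x =
        ((sqrt (p x / q x))\<^sup>2 * q x) * (norm (grad (\<lambda>y. ln (p y)) x - grad (\<lambda>y. ln (q y)) x))\<^sup>2 / 4"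
      unfolding \<psi>_def C1_fun_sqrt_ratio_diff(2)[OF C1 pos]
      by (simp add: power_mult_distrib power_divide)
    then show ?thesis unfolding ratio_sq fisher_density_def by simp
  qed
  have "(\<integral>x. (\<psi> x)\<^sup>2 * q x \<partial>lborel) \<le> inverse C * (\<integral>x. (norm (grad \<psi> x))\<^sup>2 * q x \<partial>lborel)"
    using assms(3) unfolding poincare_def
  proof (elim allE[of _ \<psi>] mp, intro conjI)
    show "C1_fun \<psi>" unfolding \<psi>_def using C1_fun_sqrt_ratio_diff(1)[OF C1 pos] .
    show "(\<integral>x. \<psi> x * q x \<partial>lborel) = 0"
      unfolding \<psi>_mult using int int_sqrt one by (simp add: B_def bhattacharyya_def)
  qed (use int int_sqrt assms(4) in \<open>simp_all add: \<psi>_mult \<psi>_sq grad_\<psi>_sq\<close>)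
  moreover have "(\<integral>x. (\<psi> x)\<^sup>2 * q x \<partial>lborel) = 1 - B\<^sup>2"
    unfolding \<psi>_sq using int int_sqrt one
    by (simp add: B_def bhattacharyya_def power2_eq_square)
  ultimately show ?thesis
    unfolding grad_\<psi>_sq B_def by simp
qed

theorem lemma2:
  fixes \<eta> \<eta>h :: "'a::euclidean_space \<Rightarrow> real" and C :: real
  assumes "pos_C1_density \<eta>" and "pos_C1_density \<eta>h"
    and "C > 0" and "poincare \<eta>h C"
  shows "ennreal (hellinger \<eta> \<eta>h) \<le> ennreal ((2 * C) powr (-1/2)) * fisher2 \<eta> \<eta>h"
  using assms(1,2)
proof (cases rule: fisher2_cases)
  case 1
  then show ?thesis using assms(3) by simp
next
  case 2
  define B where "B = bhattacharyya \<eta> \<eta>h"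
  define J where "J = (\<integral>x. fisher_density \<eta> \<eta>h x \<partial>lborel)"
  have dens: "integrable lborel \<eta>" "integrable lborel \<eta>h" "\<And>x. \<eta> x \<ge> 0" "\<And>x. \<eta>h x \<ge> 0"
    "(\<integral>x. \<eta> x \<partial>lborel) = 1" "(\<integral>x. \<eta>h x \<partial>lborel) = 1"
    using assms(1,2) unfolding pos_C1_density_def by (auto simp: less_imp_le)
  have Poincare: "1 - B\<^sup>2 \<le> inverse C * (J / 4)"
    using poincare_bhattacharyya[OF assms(1,2,4) 2(1)] unfolding B_def J_def .
  have "0 \<le> B" "B \<le> 1"
    using bhattacharyya_nonneg[OF dens(3,4)] bhattacharyya_le_1[OF dens] unfolding B_def by auto
  then have "2 - 2 * B \<le> 2 * (1 - B\<^sup>2)"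
    by (simp add: power2_eq_square algebra_simps mult_right_le_one_le)
  also have "\<dots> \<le> J / (2 * C)"
    using Poincare assms(3) by (simp add: field_simps)
  finally have "hellinger \<eta> \<eta>h \<le> sqrt (J / (2 * C))"
    unfolding hellinger_def integral_sqrt_diff_sq[OF dens] B_def by simp
  also have "\<dots> = (2 * C) powr (-1/2) * sqrt J"
    using assms(3) by (simp add: powr_minus_divide powr_half_sqrt real_sqrt_divide)
  finally show ?thesis
    unfolding 2(2) J_def by (simp add: ennreal_leI flip: ennreal_mult')
qed

end
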